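(* Let $(C,\Delta,\delta)$ be a coalgebra. Suppose there are a constant $R>0$, a linear functional $\psi\in\mathbf{L}(C,\mathbb{C})$ and a family $(f^{(\mu)})_{\mu\in M}$ of functions $r\mapsto f^{(\mu)}_r=\delta+r\psi+\mathfrak{R}^{(\mu)}_r\in\mathbf{L}(C,\mathbb{C})$ on $\mathbb{R}_+$ such that for every $c\in C$ there is a constant $D_c>0$, not depending on $\mu$, with $|\mathfrak{R}^{(\mu)}_r(c)|\le r^2D_c$ for all $\mu\in M$ and all $r\le R$. Then for every $c\in C$ there exist constants $C_c>0$ and $\Psi_c>0$ such that for all intervals $[s,t]\subset\mathbb{R}_+$, all partitions $\alpha=\{s=t_0<t_1<\dots<t_n=t\}$ ($n\in\mathbb{N}$) of $[s,t]$ with $\|\alpha\|\le R$, and every choice of $\mu_1,\dots,\mu_n\in M$, $$\big|f^{(\mu_1)}_{t_1-t_0}\star\cdots\star f^{(\mu_n)}_{t_n-t_{n-1}}(c)-e_\star^{(t-s)\psi}(c)\big|\le\|\alpha\|(t-s)\,e^{(t-s)\max(\Psi_c,C_c)}\,\frac{C_c^2+\Psi_c^2e^{\|\alpha\|\Psi_c}}{2}.$$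
   Context: $\mathbf{L}(C,\mathbb{C})$ denotes the linear functionals on $C$, with convolution $f\star g:=(f\otimes g)\circ\Delta$. For $\psi\in\mathbf{L}(C,\mathbb{C})$, $e_\star^{\psi}(c):=\sum_{n\ge0}\psi^{\star n}(c)/n!$ with $\psi^{\star0}=\delta$; this series converges for every $c\in C$. For a partition $\alpha=\{s=t_0<\dots<t_n=t\}$, $\|\alpha\|:=\max_j(t_{j+1}-t_j)$. *)

theory Defs
  imports "HOL-Analysis.Analysis"
begin

text \<open>The coproduct
  Delta c, an element of C (x) C, is given by a chosen finite Sweedler representation
  Delta c = sum of a_i (x) b_i, i.e. a list of pairs (a_i, b_i).\<close>

type_synonym 'c coprod = "'c \<Rightarrow> ('c \<times> 'c) list"

definition lin_fun :: "(complex \<Rightarrow> 'c::ab_group_add \<Rightarrow> 'c) \<Rightarrow> ('c \<Rightarrow> complex) \<Rightarrow> bool" where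
  "lin_fun scl f \<longleftrightarrow> Vector_Spaces.linear scl ((*) :: complex \<Rightarrow> complex \<Rightarrow> complex) f"

definition conv :: "'c coprod \<Rightarrow> ('c \<Rightarrow> complex) \<Rightarrow> ('c \<Rightarrow> complex) \<Rightarrow> 'c \<Rightarrow> complex" where
  "conv Delta f g c = (\<Sum>(a, b) \<leftarrow> Delta c. f a * g b)"

text \<open>Linearity of Delta and coassociativity are equalities in
  C (x) C resp. C (x) C (x) C; since the pure functionals f (x) g (resp. f (x) g (x) h)
  with f,g,h linear separate points of these tensor products, they are expressed by
  testing against such functionals.\<close>
definition coalgebra :: "(complex \<Rightarrow> 'c::ab_group_add \<Rightarrow> 'c) \<Rightarrow> 'c coprod \<Rightarrow> ('c \<Rightarrow> complex) \<Rightarrow> bool" where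
  "coalgebra scl Delta delta \<longleftrightarrow>
     vector_space scl \<and> lin_fun scl delta \<and>
     (\<forall>f g. lin_fun scl f \<longrightarrow> lin_fun scl g \<longrightarrow> lin_fun scl (conv Delta f g)) \<and>
     (\<forall>f g h. lin_fun scl f \<longrightarrow> lin_fun scl g \<longrightarrow> lin_fun scl h \<longrightarrow>
        conv Delta (conv Delta f g) h = conv Delta f (conv Delta g h)) \<and>
     (\<forall>c. (\<Sum>(a, b) \<leftarrow> Delta c. scl (delta a) b) = c) \<and>
     (\<forall>c. (\<Sum>(a, b) \<leftarrow> Delta c. scl (delta b) a) = c)"

definition conv_list :: "'c coprod \<Rightarrow> ('c \<Rightarrow> complex) \<Rightarrow> ('c \<Rightarrow> complex) list \<Rightarrow> 'c \<Rightarrow> complex" where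
  "conv_list Delta delta gs = foldr (conv Delta) gs delta"

primrec conv_pow :: "'c coprod \<Rightarrow> ('c \<Rightarrow> complex) \<Rightarrow> ('c \<Rightarrow> complex) \<Rightarrow> nat \<Rightarrow> 'c \<Rightarrow> complex" where
  "conv_pow Delta delta psi 0 = delta"
| "conv_pow Delta delta psi (Suc n) = conv Delta psi (conv_pow Delta delta psi n)"

definition conv_exp :: "'c coprod \<Rightarrow> ('c \<Rightarrow> complex) \<Rightarrow> ('c \<Rightarrow> complex) \<Rightarrow> 'c \<Rightarrow> complex" where
  "conv_exp Delta delta psi c = (\<Sum>n. conv_pow Delta delta psi n c / fact n)"

definition mesh :: "nat \<Rightarrow> (nat \<Rightarrow> real) \<Rightarrow> real" where
  "mesh n t = Max (insert 0 ((\<lambda>j. t (Suc j) - t j) ` {..<n}))"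

end

theory Submission
  imports Defs
begin

text \<open>Fix c and write \<Delta>c = \<Sum>_i a_i \<otimes> b_i. Choose a basis a_j (j \<in> J) of the left factors
  with dual functionals H_j. Then \<nu>(G) = \<Sum>_j |(H_j \<star> G)(c)| acts as a norm of G near c: by
  coassociativity \<nu>(K \<star> G) \<le> \<beta>(K) \<nu>(G), with \<beta>(K) controlled by pointwise bounds on K, and
  |G(c)| \<le> const \<nu>(G). In particular |\<psi>^n(c)| \<le> A \<Lambda>^n, so e^(\<tau>\<psi>) converges and is a convolution
  semigroup. Since f_r = \<delta> + r\<psi> + O(r^2), we have \<beta>(f_r) \<le> 1 + O(r) \<le> e^(r\<Lambda>) and
  f_r - e^(r\<psi>) = O(r^2). Comparing f_r1 \<star> ... \<star> f_rn factor by factor with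
  e^(r1 \<psi>) \<star> ... \<star> e^(rn \<psi>) = e^((t - s)\<psi>) bounds the error by
  B e^((t - s)\<Lambda>) \<Sum>_j r_j^2 \<le> B e^((t - s)\<Lambda>) \<parallel>\<alpha>\<parallel> (t - s), which has the required form after
  enlarging the constants.\<close>

lemma conv_nth:
  "conv D F G x = (\<Sum>i<length (D x). F (fst (D x ! i)) * G (snd (D x ! i)))"
  unfolding conv_def by (simp add: sum_list_sum_nth atLeast0LessThan case_prod_beta)

lemma conv_add_left: "conv D (\<lambda>y. F1 y + F2 y) G x = conv D F1 G x + conv D F2 G x"
  by (simp add: conv_nth algebra_simps sum.distrib)

lemma conv_add_right: "conv D F (\<lambda>y. G1 y + G2 y) x = conv D F G1 x + conv D F G2 x"
  by (simp add: conv_nth algebra_simps sum.distrib)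

lemma conv_diff_left: "conv D (\<lambda>y. F1 y - F2 y) G x = conv D F1 G x - conv D F2 G x"
  by (simp add: conv_nth algebra_simps sum_subtractf)

lemma conv_diff_right: "conv D F (\<lambda>y. G1 y - G2 y) x = conv D F G1 x - conv D F G2 x"
  by (simp add: conv_nth algebra_simps sum_subtractf)

lemma conv_cmult_left: "conv D (\<lambda>y. a * F y) G x = a * conv D F G x"
  by (simp add: conv_nth algebra_simps sum_distrib_left)

lemma conv_cmult_right: "conv D F (\<lambda>y. a * G y) x = a * conv D F G x"
  by (simp add: conv_nth algebra_simps sum_distrib_left)

locale complex_coalgebra =
  fixes scl :: "complex \<Rightarrow> 'c::ab_group_add \<Rightarrow> 'c"
    and Delta :: "'c coprod" and delta :: "'c \<Rightarrow> complex"
  assumes coalgebra: "coalgebra scl Delta delta"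
begin

lemma vector_space: "vector_space scl"
  using coalgebra by (simp add: coalgebra_def)

lemma lin_fun_char:
  "lin_fun scl f \<longleftrightarrow> (\<forall>x y. f (x + y) = f x + f y) \<and> (\<forall>a x. f (scl a x) = a * f x)"
proof -
  have "vector_space ((*) :: complex \<Rightarrow> complex \<Rightarrow> complex)"
    by (simp add: vector_space_def algebra_simps)
  with vector_space show ?thesis
    unfolding lin_fun_def Vector_Spaces.linear_iff by simp
qed

lemma lin_fun_add: "lin_fun scl f \<Longrightarrow> f (x + y) = f x + f y"
  and lin_fun_scale: "lin_fun scl f \<Longrightarrow> f (scl a x) = a * f x"
  by (simp_all add: lin_fun_char)

lemma lin_fun_plus: "lin_fun scl f \<Longrightarrow> lin_fun scl g \<Longrightarrow> lin_fun scl (\<lambda>x. f x + g x)"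
  and lin_fun_minus: "lin_fun scl f \<Longrightarrow> lin_fun scl g \<Longrightarrow> lin_fun scl (\<lambda>x. f x - g x)"
  and lin_fun_cmult: "lin_fun scl f \<Longrightarrow> lin_fun scl (\<lambda>x. a * f x)"
  and lin_fun_zero: "lin_fun scl (\<lambda>x. 0)"
  by (simp_all add: lin_fun_char algebra_simps)

lemma lin_fun_sum:
  "finite J \<Longrightarrow> (\<And>j. j \<in> J \<Longrightarrow> lin_fun scl (g j)) \<Longrightarrow> lin_fun scl (\<lambda>x. \<Sum>j\<in>J. g j x)"
  by (induction J rule: finite_induct) (simp_all add: lin_fun_zero lin_fun_plus)

lemma lin_fun_sum_list:
  assumes "lin_fun scl f"
  shows "f (\<Sum>x\<leftarrow>xs. g x) = (\<Sum>x\<leftarrow>xs. f (g x))"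
proof (induction xs)
  case Nil
  show ?case using lin_fun_add[OF assms, of 0 0] by simp
qed (simp add: lin_fun_add[OF assms])

lemma lin_fun_delta: "lin_fun scl delta"
  and lin_fun_conv: "lin_fun scl f \<Longrightarrow> lin_fun scl g \<Longrightarrow> lin_fun scl (conv Delta f g)"
  and conv_assoc: "lin_fun scl f \<Longrightarrow> lin_fun scl g \<Longrightarrow> lin_fun scl h \<Longrightarrow>
         conv Delta (conv Delta f g) h = conv Delta f (conv Delta g h)"
  using coalgebra by (simp_all add: coalgebra_def)

lemma conv_delta_left:
  assumes "lin_fun scl f"
  shows "conv Delta delta f = f"
proof
  fix c
  have "f c = f (\<Sum>(a, b) \<leftarrow> Delta c. scl (delta a) b)"
    using coalgebra by (simp add: coalgebra_def)
  also have "\<dots> = conv Delta delta f c"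
    unfolding lin_fun_sum_list[OF assms] conv_def
    by (intro arg_cong[where f = sum_list] map_cong) (auto simp: lin_fun_scale[OF assms])
  finally show "conv Delta delta f c = f c" ..
qed

lemma conv_delta_right:
  assumes "lin_fun scl f"
  shows "conv Delta f delta = f"
proof
  fix c
  have "f c = f (\<Sum>(a, b) \<leftarrow> Delta c. scl (delta b) a)"
    using coalgebra by (simp add: coalgebra_def)
  also have "\<dots> = conv Delta f delta c"
    unfolding lin_fun_sum_list[OF assms] conv_def
    by (intro arg_cong[where f = sum_list] map_cong) (auto simp: lin_fun_scale[OF assms] mult.commute)
  finally show "conv Delta f delta c = f c" ..
qed

section \<open>A local norm at a point\<close>

abbreviation left_factor :: "'c \<Rightarrow> nat \<Rightarrow> 'c" where
  "left_factor x i \<equiv> fst (Delta x ! i)"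

abbreviation right_factor :: "'c \<Rightarrow> nat \<Rightarrow> 'c" where
  "right_factor x i \<equiv> snd (Delta x ! i)"

text \<open>Without a topology on C, linear dependence among the left Sweedler factors of x is
  only visible through linear functionals: the factors indexed by J form a basis "as seen by
  functionals", and H is a family of linear functionals biorthogonal to it.\<close>

definition left_dual_basis :: "'c \<Rightarrow> nat set \<Rightarrow> (nat \<Rightarrow> 'c \<Rightarrow> complex) \<Rightarrow> bool" where
  "left_dual_basis x J H \<longleftrightarrow> J \<subseteq> {..<length (Delta x)} \<and> (\<forall>j\<in>J. lin_fun scl (H j)) \<and>
     (\<forall>j\<in>J. \<forall>l\<in>J. H j (left_factor x l) = (if j = l then 1 else 0)) \<and>
     (\<forall>G. lin_fun scl G \<longrightarrow> (\<forall>i<length (Delta x).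
        G (left_factor x i) = (\<Sum>j\<in>J. G (left_factor x j) * H j (left_factor x i))))"

lemma left_dual_basis_finite: "left_dual_basis x J H \<Longrightarrow> finite J"
  unfolding left_dual_basis_def using finite_subset by blast

lemma left_dual_basis_lin_fun: "left_dual_basis x J H \<Longrightarrow> j \<in> J \<Longrightarrow> lin_fun scl (H j)"
  unfolding left_dual_basis_def by blast

lemma left_dual_basis_expand:
  "left_dual_basis x J H \<Longrightarrow> lin_fun scl G \<Longrightarrow> i < length (Delta x) \<Longrightarrow>
     G (left_factor x i) = (\<Sum>j\<in>J. G (left_factor x j) * H j (left_factor x i))"
  unfolding left_dual_basis_def by blast

text \<open>A dual basis is obtained from an index set J of minimal cardinality among those
  whose left factors determine all others.\<close>

definition determining_factors :: "'c \<Rightarrow> nat set \<Rightarrow> bool" where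
  "determining_factors x J \<longleftrightarrow> J \<subseteq> {..<length (Delta x)} \<and>
     (\<forall>G. lin_fun scl G \<longrightarrow> (\<forall>j\<in>J. G (left_factor x j) = 0) \<longrightarrow>
        (\<forall>i<length (Delta x). G (left_factor x i) = 0))"

lemma minimal_determining_factors_biorthogonal:
  assumes J: "determining_factors x J" and minimal: "\<And>J'. determining_factors x J' \<Longrightarrow> card J \<le> card J'"
    and j: "j \<in> J"
  shows "\<exists>h. lin_fun scl h \<and> (\<forall>l\<in>J. h (left_factor x l) = (if j = l then 1 else 0))"
proof -
  have "finite J" using J finite_subset unfolding determining_factors_def by blast
  then have "\<not> determining_factors x (J - {j})"
    using minimal[of "J - {j}"] card_Diff1_less[OF _ j] by (meson leD)
  then obtain G i where G: "lin_fun scl G" "\<forall>l\<in>J - {j}. G (left_factor x l) = 0"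
    and "i < length (Delta x)" "G (left_factor x i) \<noteq> 0"
    using J unfolding determining_factors_def by blast
  have "G (left_factor x j) \<noteq> 0"
  proof
    assume "G (left_factor x j) = 0"
    with G(2) have "\<forall>l\<in>J. G (left_factor x l) = 0" by blast
    with J G(1) \<open>i < length (Delta x)\<close> \<open>G (left_factor x i) \<noteq> 0\<close> show False
      unfolding determining_factors_def by blast
  qed
  with G have "lin_fun scl (\<lambda>y. G y / G (left_factor x j)) \<and>
      (\<forall>l\<in>J. G (left_factor x l) / G (left_factor x j) = (if j = l then 1 else 0))"
    using lin_fun_cmult[OF G(1), of "inverse (G (left_factor x j))"] by (auto simp: field_simps)
  then show ?thesis by blast
qed

lemma determining_factors_expand:
  assumes J: "determining_factors x J" and H: "\<And>j. j \<in> J \<Longrightarrow> lin_fun scl (H j)"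
    and biorth: "\<And>j l. j \<in> J \<Longrightarrow> l \<in> J \<Longrightarrow> H j (left_factor x l) = (if j = l then 1 else 0)"
    and G: "lin_fun scl G" and i: "i < length (Delta x)"
  shows "G (left_factor x i) = (\<Sum>j\<in>J. G (left_factor x j) * H j (left_factor x i))"
proof -
  have fin: "finite J" using J finite_subset unfolding determining_factors_def by blast
  define G' where "G' y = G y - (\<Sum>j\<in>J. G (left_factor x j) * H j y)" for y
  have "lin_fun scl G'"
    unfolding G'_def by (intro lin_fun_minus G lin_fun_sum fin lin_fun_cmult H)
  moreover have "G' (left_factor x l) = 0" if l: "l \<in> J" for l
  proof -
    have "(\<Sum>j\<in>J. G (left_factor x j) * H j (left_factor x l)) = (\<Sum>j\<in>J. if j = l then G (left_factor x j) else 0)"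
      by (rule sum.cong) (simp_all add: biorth l)
    then show ?thesis using fin l by (simp add: G'_def)
  qed
  ultimately have "G' (left_factor x i) = 0"
    using J i unfolding determining_factors_def by blast
  then show ?thesis by (simp add: G'_def)
qed

lemma left_dual_basis_exists: "\<exists>J H. left_dual_basis x J H"
proof -
  have "determining_factors x {..<length (Delta x)}"
    by (simp add: determining_factors_def)
  then obtain J where J: "determining_factors x J"
    and minimal: "\<And>J'. determining_factors x J' \<Longrightarrow> card J \<le> card J'"
    using ex_has_least_nat[of "determining_factors x" _ card] by blast
  have "\<forall>j\<in>J. \<exists>h. lin_fun scl h \<and> (\<forall>l\<in>J. h (left_factor x l) = (if j = l then 1 else 0))"
    using minimal_determining_factors_biorthogonal[OF J minimal] by blast
  then obtain H where "\<forall>j\<in>J. lin_fun scl (H j) \<and> (\<forall>l\<in>J. H j (left_factor x l) = (if j = l then 1 else 0))"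
    by (rule bchoice[THEN exE])
  then have H: "\<And>j. j \<in> J \<Longrightarrow> lin_fun scl (H j)"
    and biorth: "\<And>j l. j \<in> J \<Longrightarrow> l \<in> J \<Longrightarrow> H j (left_factor x l) = (if j = l then 1 else 0)"
    by blast+
  have "left_dual_basis x J H"
    unfolding left_dual_basis_def
  proof (intro conjI ballI allI impI)
    show "J \<subseteq> {..<length (Delta x)}"
      using J by (simp add: determining_factors_def)
  qed (simp_all add: H biorth determining_factors_expand[OF J H biorth, symmetric])
  then show ?thesis by blast
qed

definition local_norm :: "'c \<Rightarrow> nat set \<Rightarrow> (nat \<Rightarrow> 'c \<Rightarrow> complex) \<Rightarrow> ('c \<Rightarrow> complex) \<Rightarrow> real" where
  "local_norm x J H G = (\<Sum>j\<in>J. cmod (conv Delta (H j) G x))"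

definition dual_weight :: "'c \<Rightarrow> nat set \<Rightarrow> (nat \<Rightarrow> 'c \<Rightarrow> complex) \<Rightarrow> ('c \<Rightarrow> real) \<Rightarrow> real" where
  "dual_weight x J H W =
     (\<Sum>j\<in>J. \<Sum>i<length (Delta x). cmod (H j (left_factor x i)) * W (right_factor x i))"

definition column_weight :: "'c \<Rightarrow> nat set \<Rightarrow> (nat \<Rightarrow> 'c \<Rightarrow> complex) \<Rightarrow> ('c \<Rightarrow> real) \<Rightarrow> real" where
  "column_weight x J H W = (\<Sum>l\<in>J. dual_weight (left_factor x l) J H W)"

lemma local_norm_nonneg: "local_norm x J H G \<ge> 0"
  unfolding local_norm_def by (simp add: sum_nonneg)

lemma dual_weight_nonneg: "(\<And>y. W y \<ge> 0) \<Longrightarrow> dual_weight x J H W \<ge> 0"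
  unfolding dual_weight_def by (intro sum_nonneg mult_nonneg_nonneg) auto

lemma column_weight_nonneg: "(\<And>y. W y \<ge> 0) \<Longrightarrow> column_weight x J H W \<ge> 0"
  unfolding column_weight_def by (intro sum_nonneg dual_weight_nonneg)

lemma dual_weight_le_column_weight:
  "left_dual_basis x J H \<Longrightarrow> (\<And>y. W y \<ge> 0) \<Longrightarrow> l \<in> J \<Longrightarrow>
     dual_weight (left_factor x l) J H W \<le> column_weight x J H W"
  unfolding column_weight_def
  by (intro member_le_sum dual_weight_nonneg left_dual_basis_finite) auto

lemma local_norm_add_le:
  "local_norm x J H (\<lambda>y. G1 y + G2 y) \<le> local_norm x J H G1 + local_norm x J H G2"
  unfolding local_norm_def conv_add_right sum.distrib[symmetric]
  by (intro sum_mono norm_triangle_ineq)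

lemma local_norm_cmult: "local_norm x J H (\<lambda>y. a * G y) = cmod a * local_norm x J H G"
  unfolding local_norm_def conv_cmult_right by (simp add: norm_mult sum_distrib_left)

lemma local_norm_le_dual_weight:
  assumes "\<And>i. i < length (Delta x) \<Longrightarrow> cmod (G (right_factor x i)) \<le> \<rho> * W (right_factor x i)"
  shows "local_norm x J H G \<le> \<rho> * dual_weight x J H W"
proof -
  have "cmod (conv Delta (H j) G x)
      \<le> \<rho> * (\<Sum>i<length (Delta x). cmod (H j (left_factor x i)) * W (right_factor x i))" for j
  proof -
    have "cmod (conv Delta (H j) G x)
        \<le> (\<Sum>i<length (Delta x). cmod (H j (left_factor x i)) * cmod (G (right_factor x i)))"
      unfolding conv_nth by (rule order_trans[OF norm_sum]) (simp add: norm_mult)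
    also have "\<dots> \<le> (\<Sum>i<length (Delta x). cmod (H j (left_factor x i)) * (\<rho> * W (right_factor x i)))"
      by (intro sum_mono mult_left_mono assms) auto
    finally show ?thesis by (simp add: sum_distrib_left ac_simps)
  qed
  then show ?thesis
    unfolding local_norm_def dual_weight_def sum_distrib_left by (rule sum_mono)
qed

lemma conv_conv_dual_expand:
  assumes basis: "left_dual_basis x J H" and K: "lin_fun scl K" and G: "lin_fun scl G" and j: "j \<in> J"
  shows "conv Delta (H j) (conv Delta K G) x =
    (\<Sum>l\<in>J. conv Delta (H j) K (left_factor x l) * conv Delta (H l) G x)"
proof -
  have HK: "lin_fun scl (conv Delta (H j) K)"
    by (intro lin_fun_conv K left_dual_basis_lin_fun[OF basis j])
  have "conv Delta (H j) (conv Delta K G) x = conv Delta (conv Delta (H j) K) G x"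
    using conv_assoc[OF left_dual_basis_lin_fun[OF basis j] K G] by simp
  also have "\<dots> = (\<Sum>i<length (Delta x). (\<Sum>l\<in>J. conv Delta (H j) K (left_factor x l) *
      H l (left_factor x i)) * G (right_factor x i))"
    unfolding conv_nth[of Delta "conv Delta (H j) K"]
    using left_dual_basis_expand[OF basis HK] by (intro sum.cong) auto
  also have "\<dots> = (\<Sum>l\<in>J. conv Delta (H j) K (left_factor x l) *
      (\<Sum>i<length (Delta x). H l (left_factor x i) * G (right_factor x i)))"
    by (simp only: sum_distrib_left sum_distrib_right mult.assoc) (rule sum.swap)
  finally show ?thesis by (simp add: conv_nth[of Delta "H _" G x])
qed

lemma eval_dual_expand:
  assumes basis: "left_dual_basis x J H" and F: "lin_fun scl F"
  shows "F x = (\<Sum>j\<in>J. delta (left_factor x j) * conv Delta (H j) F x)"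
proof -
  have "F x = conv Delta delta F x" by (simp add: conv_delta_left[OF F])
  also have "\<dots> = (\<Sum>i<length (Delta x). (\<Sum>j\<in>J. delta (left_factor x j) *
      H j (left_factor x i)) * F (right_factor x i))"
    unfolding conv_nth[of Delta delta]
    using left_dual_basis_expand[OF basis lin_fun_delta] by (intro sum.cong) auto
  also have "\<dots> = (\<Sum>j\<in>J. delta (left_factor x j) *
      (\<Sum>i<length (Delta x). H j (left_factor x i) * F (right_factor x i)))"
    by (simp only: sum_distrib_left sum_distrib_right mult.assoc) (rule sum.swap)
  finally show ?thesis by (simp add: conv_nth[of Delta "H _" F x])
qed

lemma norm_le_local_norm:
  assumes basis: "left_dual_basis x J H" and F: "lin_fun scl F"
  shows "cmod (F x) \<le> (\<Sum>j\<in>J. cmod (delta (left_factor x j))) * local_norm x J H F"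
proof -
  have "cmod (F x) \<le> (\<Sum>j\<in>J. cmod (delta (left_factor x j)) * cmod (conv Delta (H j) F x))"
    unfolding eval_dual_expand[OF basis F] by (rule order_trans[OF norm_sum]) (simp add: norm_mult)
  also have "\<dots> \<le> (\<Sum>j\<in>J. cmod (delta (left_factor x j)) * local_norm x J H F)"
    unfolding local_norm_def using left_dual_basis_finite[OF basis]
    by (intro sum_mono mult_left_mono member_le_sum) auto
  finally show ?thesis by (simp add: sum_distrib_right)
qed

lemma local_norm_conv_le:
  assumes basis: "left_dual_basis x J H" and K: "lin_fun scl K" and G: "lin_fun scl G"
    and column: "\<And>l. l \<in> J \<Longrightarrow> local_norm (left_factor x l) J H K \<le> \<beta>"
  shows "local_norm x J H (conv Delta K G) \<le> \<beta> * local_norm x J H G"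
proof -
  have "local_norm x J H (conv Delta K G)
      \<le> (\<Sum>j\<in>J. \<Sum>l\<in>J. cmod (conv Delta (H j) K (left_factor x l)) * cmod (conv Delta (H l) G x))"
    unfolding local_norm_def
  proof (rule sum_mono)
    fix j assume "j \<in> J"
    show "cmod (conv Delta (H j) (conv Delta K G) x) \<le>
        (\<Sum>l\<in>J. cmod (conv Delta (H j) K (left_factor x l)) * cmod (conv Delta (H l) G x))"
      unfolding conv_conv_dual_expand[OF basis K G \<open>j \<in> J\<close>]
      by (rule order_trans[OF norm_sum]) (simp add: norm_mult)
  qed
  also have "\<dots> = (\<Sum>l\<in>J. local_norm (left_factor x l) J H K * cmod (conv Delta (H l) G x))"
    unfolding local_norm_def by (subst sum.swap) (simp add: sum_distrib_right)
  also have "\<dots> \<le> (\<Sum>l\<in>J. \<beta> * cmod (conv Delta (H l) G x))"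
    by (intro sum_mono mult_right_mono column) auto
  finally show ?thesis by (simp add: local_norm_def sum_distrib_left)
qed

lemma local_norm_conv_le_weight:
  assumes basis: "left_dual_basis x J H" and K: "lin_fun scl K" and G: "lin_fun scl G"
    and W: "\<And>y. W y \<ge> 0" and \<rho>: "\<rho> \<ge> 0" and bound: "\<And>y. cmod (K y) \<le> \<rho> * W y"
  shows "local_norm x J H (conv Delta K G) \<le> \<rho> * column_weight x J H W * local_norm x J H G"
proof (rule local_norm_conv_le[OF basis K G])
  fix l assume "l \<in> J"
  have "local_norm (left_factor x l) J H K \<le> \<rho> * dual_weight (left_factor x l) J H W"
    by (rule local_norm_le_dual_weight) (rule bound)
  also have "\<dots> \<le> \<rho> * column_weight x J H W"
    using dual_weight_le_column_weight[OF basis W \<open>l \<in> J\<close>] \<rho> by (rule mult_left_mono)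
  finally show "local_norm (left_factor x l) J H K \<le> \<rho> * column_weight x J H W" .
qed

lemma local_norm_first_order_conv_le:
  assumes basis: "left_dual_basis x J H" and g: "lin_fun scl g" and G: "lin_fun scl G"
    and psi: "lin_fun scl psi" and W: "\<And>y. W y \<ge> 0" and \<rho>: "\<rho> \<ge> 0"
    and remainder: "\<And>y. cmod (g y - delta y - \<rho> * psi y) \<le> \<rho>\<^sup>2 * W y"
  shows "local_norm x J H (conv Delta g G) \<le>
    (1 + \<rho> * column_weight x J H (\<lambda>y. cmod (psi y)) + \<rho>\<^sup>2 * column_weight x J H W) * local_norm x J H G"
proof -
  define Rm where "Rm y = g y - delta y - \<rho> * psi y" for y
  have Rm: "lin_fun scl Rm"
    unfolding Rm_def by (intro lin_fun_minus g lin_fun_delta lin_fun_cmult psi)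
  have "conv Delta g G = (\<lambda>y. G y + (\<rho> * conv Delta psi G y + conv Delta Rm G y))"
    using conv_add_left[of Delta "\<lambda>y. delta y + \<rho> * psi y" Rm G]
    by (simp add: fun_eq_iff Rm_def conv_add_left conv_cmult_left conv_delta_left[OF G])
  then have "local_norm x J H (conv Delta g G) \<le>
      local_norm x J H G + local_norm x J H (\<lambda>y. \<rho> * conv Delta psi G y + conv Delta Rm G y)"
    using local_norm_add_le by metis
  also have "\<dots> \<le> local_norm x J H G +
      (\<rho> * local_norm x J H (conv Delta psi G) + local_norm x J H (conv Delta Rm G))"
    using local_norm_add_le[of x J H "\<lambda>y. \<rho> * conv Delta psi G y"] \<rho>
    by (simp add: local_norm_cmult)
  also have "\<dots> \<le> local_norm x J H G
      + (\<rho> * (1 * column_weight x J H (\<lambda>y. cmod (psi y)) * local_norm x J H G)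
         + \<rho>\<^sup>2 * column_weight x J H W * local_norm x J H G)"
    using \<rho> W Rm_def remainder
    by (intro add_left_mono add_mono mult_left_mono local_norm_conv_le_weight[OF basis] psi Rm G) auto
  finally show ?thesis by (simp add: algebra_simps)
qed

lemma local_norm_first_order_conv_le_exp:
  assumes basis: "left_dual_basis x J H" and g: "lin_fun scl g" and G: "lin_fun scl G"
    and psi: "lin_fun scl psi" and W: "\<And>y. W y \<ge> 0" and \<rho>: "0 \<le> \<rho>" "\<rho> \<le> R"
    and remainder: "\<And>y. cmod (g y - delta y - \<rho> * psi y) \<le> \<rho>\<^sup>2 * W y"
    and \<Lambda>: "column_weight x J H (\<lambda>y. cmod (psi y)) + R * column_weight x J H W \<le> \<Lambda>"
  shows "local_norm x J H (conv Delta g G) \<le> exp (\<rho> * \<Lambda>) * local_norm x J H G"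
proof -
  have "\<rho>\<^sup>2 * column_weight x J H W \<le> \<rho> * (R * column_weight x J H W)"
    using \<rho> column_weight_nonneg[of W x J H, OF W]
    by (simp add: power2_eq_square mult.assoc mult_left_mono mult_right_mono)
  then have "1 + \<rho> * column_weight x J H (\<lambda>y. cmod (psi y)) + \<rho>\<^sup>2 * column_weight x J H W \<le> 1 + \<rho> * \<Lambda>"
    using mult_left_mono[OF \<Lambda> \<rho>(1)] by (simp add: distrib_left)
  also have "\<dots> \<le> exp (\<rho> * \<Lambda>)"
    by (rule exp_ge_add_one_self)
  finally show ?thesis
    using local_norm_first_order_conv_le[OF basis g G psi W \<rho>(1) remainder]
    by (meson local_norm_nonneg mult_right_mono order_trans)
qed

lemma lin_fun_conv_list: "(\<And>g. g \<in> set gs \<Longrightarrow> lin_fun scl g) \<Longrightarrow> lin_fun scl (conv_list Delta delta gs)"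
  by (induction gs) (simp_all add: conv_list_def lin_fun_delta lin_fun_conv)

end

lemma increment_le_mesh: "j < n \<Longrightarrow> t (Suc j) - t j \<le> mesh n t"
  unfolding mesh_def by (intro Max_ge) auto

lemma mesh_nonneg: "mesh n t \<ge> 0"
  unfolding mesh_def by (intro Max_ge) auto

lemma sum_squared_increments_le:
  fixes t :: "nat \<Rightarrow> real"
  assumes "\<And>j. j < n \<Longrightarrow> t j \<le> t (Suc j)"
  shows "(\<Sum>j<n. (t (Suc j) - t j)\<^sup>2) \<le> mesh n t * (t n - t 0)"
proof -
  have "(\<Sum>j<n. (t (Suc j) - t j)\<^sup>2) \<le> (\<Sum>j<n. mesh n t * (t (Suc j) - t j))"
  proof (rule sum_mono)
    fix j assume "j \<in> {..<n}"
    then have "t (Suc j) - t j \<le> mesh n t" "0 \<le> t (Suc j) - t j"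
      using assms increment_le_mesh by auto
    from mult_right_mono[OF this]
    show "(t (Suc j) - t j)\<^sup>2 \<le> mesh n t * (t (Suc j) - t j)"
      by (simp add: power2_eq_square)
  qed
  also have "\<dots> = mesh n t * (t n - t 0)"
    by (simp only: sum_distrib_left[symmetric] sum_lessThan_telescope)
  finally show ?thesis .
qed

section \<open>The convolution exponential\<close>

lemma exp_series_sums: "(\<lambda>n. x ^ n / fact n) sums exp (x :: real)"
  using exp_converges[of x] by (simp add: divide_inverse mult.commute)

lemma summable_exp_series: "summable (\<lambda>n. (x :: real) ^ n / fact n)"
  using exp_series_sums sums_summable by blast

lemma suminf_exp_series: "(\<Sum>n. (x :: real) ^ n / fact n) = exp x"
  using exp_series_sums sums_unique by metis

locale coalgebra_functional = complex_coalgebra +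
  fixes psi
  assumes lin_fun_psi: "lin_fun scl psi"
begin

abbreviation psi_pow :: "nat \<Rightarrow> 'a \<Rightarrow> complex" where
  "psi_pow n \<equiv> conv_pow Delta delta psi n"

lemma lin_fun_psi_pow: "lin_fun scl (psi_pow n)"
  by (induction n) (simp_all add: lin_fun_delta lin_fun_conv lin_fun_psi)

lemma psi_pow_add: "conv Delta (psi_pow p) (psi_pow q) = psi_pow (p + q)"
proof (induction p)
  case 0
  show ?case by (simp add: conv_delta_left[OF lin_fun_psi_pow])
next
  case (Suc p)
  then show ?case by (simp add: conv_assoc[OF lin_fun_psi lin_fun_psi_pow lin_fun_psi_pow])
qed

lemma psi_pow_growth: "\<exists>A \<Lambda>. A \<ge> 0 \<and> \<Lambda> \<ge> 0 \<and> (\<forall>n. cmod (psi_pow n x) \<le> A * \<Lambda> ^ n)"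
proof -
  obtain J H where basis: "left_dual_basis x J H" using left_dual_basis_exists by blast
  define \<beta> where "\<beta> = (\<Sum>l\<in>J. local_norm (left_factor x l) J H psi)"
  define A where "A = (\<Sum>j\<in>J. cmod (delta (left_factor x j))) * local_norm x J H delta"
  have \<beta>: "\<beta> \<ge> 0" unfolding \<beta>_def by (intro sum_nonneg local_norm_nonneg)
  have A: "A \<ge> 0" unfolding A_def by (intro mult_nonneg_nonneg sum_nonneg local_norm_nonneg) auto
  have column: "local_norm (left_factor x l) J H psi \<le> \<beta>" if "l \<in> J" for l
    unfolding \<beta>_def using left_dual_basis_finite[OF basis] that
    by (intro member_le_sum local_norm_nonneg)
  have local: "local_norm x J H (psi_pow n) \<le> \<beta> ^ n * local_norm x J H delta" for n
  proof (induction n)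
    case (Suc n)
    have "local_norm x J H (psi_pow (Suc n)) \<le> \<beta> * local_norm x J H (psi_pow n)"
      unfolding conv_pow.simps by (rule local_norm_conv_le[OF basis lin_fun_psi lin_fun_psi_pow column])
    also have "\<dots> \<le> \<beta> * (\<beta> ^ n * local_norm x J H delta)"
      using Suc \<beta> by (rule mult_left_mono)
    finally show ?case by (simp add: mult.assoc)
  qed simp
  have "cmod (psi_pow n x) \<le> A * \<beta> ^ n" for n
    using order_trans[OF norm_le_local_norm[OF basis lin_fun_psi_pow] mult_left_mono[OF local]]
    by (simp add: A_def sum_nonneg ac_simps)
  with A \<beta> show ?thesis by blast
qed

definition exp_psi :: "real \<Rightarrow> 'a \<Rightarrow> complex" where
  "exp_psi \<tau> y = (\<Sum>n. complex_of_real \<tau> ^ n * psi_pow n y / fact n)"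

lemma conv_pow_cmult: "conv_pow Delta delta (\<lambda>y. a * psi y) n = (\<lambda>y. a ^ n * psi_pow n y)"
proof (induction n)
  case (Suc n)
  show ?case
    by (simp only: conv_pow.simps Suc.IH) (simp add: fun_eq_iff conv_cmult_left conv_cmult_right)
qed simp

lemma conv_exp_eq_exp_psi: "conv_exp Delta delta (\<lambda>y. complex_of_real \<tau> * psi y) = exp_psi \<tau>"
  by (simp add: fun_eq_iff conv_exp_def exp_psi_def conv_pow_cmult)

lemma norm_exp_psi_term_le:
  assumes "\<And>n. cmod (psi_pow n y) \<le> A * \<Lambda> ^ n" "\<Lambda> \<ge> 0"
  shows "norm (complex_of_real \<tau> ^ n * psi_pow n y / fact n) \<le> A * ((\<bar>\<tau>\<bar> * \<Lambda>) ^ n / fact n)"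
proof -
  have "norm (complex_of_real \<tau> ^ n * psi_pow n y / fact n) = \<bar>\<tau>\<bar> ^ n * cmod (psi_pow n y) / fact n"
    by (simp add: norm_mult norm_divide norm_power)
  also have "\<dots> \<le> \<bar>\<tau>\<bar> ^ n * (A * \<Lambda> ^ n) / fact n"
    by (intro divide_right_mono mult_left_mono assms) auto
  finally show ?thesis by (simp add: power_mult_distrib ac_simps)
qed

lemma summable_norm_exp_psi_series:
  "summable (\<lambda>n. norm (complex_of_real \<tau> ^ n * psi_pow n y / fact n))"
proof -
  obtain A \<Lambda> where "\<Lambda> \<ge> 0" "\<And>n. cmod (psi_pow n y) \<le> A * \<Lambda> ^ n"
    using psi_pow_growth by blast
  then have "\<And>n. norm (norm (complex_of_real \<tau> ^ n * psi_pow n y / fact n))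
      \<le> A * ((\<bar>\<tau>\<bar> * \<Lambda>) ^ n / fact n)"
    using norm_exp_psi_term_le by simp
  then show ?thesis
    by (rule summable_comparison_test'[OF summable_mult[OF summable_exp_series], of 0])
qed

lemma summable_exp_psi_series: "summable (\<lambda>n. complex_of_real \<tau> ^ n * psi_pow n y / fact n)"
  by (rule summable_norm_cancel[OF summable_norm_exp_psi_series])

lemma norm_exp_psi_le:
  assumes "\<And>n. cmod (psi_pow n y) \<le> A * \<Lambda> ^ n" "\<Lambda> \<ge> 0"
  shows "cmod (exp_psi \<tau> y) \<le> A * exp (\<bar>\<tau>\<bar> * \<Lambda>)"
proof -
  have "cmod (exp_psi \<tau> y) \<le> (\<Sum>n. A * ((\<bar>\<tau>\<bar> * \<Lambda>) ^ n / fact n))"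
    unfolding exp_psi_def
    by (rule norm_suminf_le[OF norm_exp_psi_term_le[OF assms] summable_mult[OF summable_exp_series]])
  also have "\<dots> = A * exp (\<bar>\<tau>\<bar> * \<Lambda>)"
    by (simp only: suminf_mult[OF summable_exp_series] suminf_exp_series)
  finally show ?thesis .
qed

lemma exp_psi_zero: "exp_psi 0 = delta"
proof
  fix y
  have "(\<lambda>n. complex_of_real 0 ^ n * psi_pow n y / fact n) sums
      (\<Sum>n<1. complex_of_real 0 ^ n * psi_pow n y / fact n)"
    by (rule sums_finite) auto
  then show "exp_psi 0 y = delta y" unfolding exp_psi_def by (simp add: sums_iff)
qed

lemma lin_fun_exp_psi: "lin_fun scl (exp_psi \<tau>)"
  unfolding lin_fun_char
proof (intro conjI allI)
  fix a b
  have "exp_psi \<tau> (a + b) = (\<Sum>n. complex_of_real \<tau> ^ n * psi_pow n a / fact n +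
      complex_of_real \<tau> ^ n * psi_pow n b / fact n)"
    unfolding exp_psi_def by (simp add: lin_fun_add[OF lin_fun_psi_pow] algebra_simps add_divide_distrib)
  also have "\<dots> = exp_psi \<tau> a + exp_psi \<tau> b"
    unfolding exp_psi_def by (rule suminf_add[OF summable_exp_psi_series summable_exp_psi_series, symmetric])
  finally show "exp_psi \<tau> (a + b) = exp_psi \<tau> a + exp_psi \<tau> b" .
next
  fix c a
  have "exp_psi \<tau> (scl c a) = (\<Sum>n. c * (complex_of_real \<tau> ^ n * psi_pow n a / fact n))"
    unfolding exp_psi_def by (simp add: lin_fun_scale[OF lin_fun_psi_pow] algebra_simps)
  also have "\<dots> = c * exp_psi \<tau> a"
    unfolding exp_psi_def by (rule suminf_mult[OF summable_exp_psi_series])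
  finally show "exp_psi \<tau> (scl c a) = c * exp_psi \<tau> a" .
qed

lemma exp_psi_second_order:
  assumes growth: "\<And>n. cmod (psi_pow n y) \<le> A * \<Lambda> ^ n" and A: "A \<ge> 0" and \<Lambda>: "\<Lambda> \<ge> 0"
    and r: "r \<ge> 0"
  shows "cmod (exp_psi r y - delta y - r * psi y) \<le> r\<^sup>2 * (A * \<Lambda>\<^sup>2 * exp (r * \<Lambda>) / 2)"
proof -
  define t where "t n = complex_of_real r ^ n * psi_pow n y / fact n" for n
  have "exp_psi r y = (\<Sum>n. t (n + 2)) + (\<Sum>i<2. t i)"
    unfolding exp_psi_def t_def[symmetric]
    by (rule suminf_split_initial_segment) (simp add: t_def summable_exp_psi_series)
  moreover have "(\<Sum>i<2. t i) = delta y + r * psi y"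
    by (simp add: t_def numeral_2_eq_2 conv_delta_right[OF lin_fun_psi])
  ultimately have remainder: "exp_psi r y - delta y - r * psi y = (\<Sum>n. t (n + 2))"
    by simp
  have "norm (t (n + 2)) \<le> A * (r * \<Lambda>)\<^sup>2 / 2 * ((r * \<Lambda>) ^ n / fact n)" for n
  proof -
    have fact: "2 * fact n \<le> (fact (n + 2) :: real)"
    proof -
      have "2 * (1 * fact n) \<le> (real n + 2) * ((real n + 1) * fact n)"
        by (intro mult_mono) auto
      then show ?thesis by (simp add: fact_Suc algebra_simps numeral_2_eq_2)
    qed
    have "norm (t (n + 2)) \<le> A * ((\<bar>r\<bar> * \<Lambda>) ^ (n + 2) / fact (n + 2))"
      unfolding t_def by (rule norm_exp_psi_term_le[OF growth \<Lambda>])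
    also have "\<dots> = A * ((r * \<Lambda>) ^ n * (r * \<Lambda>)\<^sup>2 / fact (n + 2))"
      using r by (simp add: power_add power2_eq_square)
    also have "\<dots> \<le> A * ((r * \<Lambda>) ^ n * (r * \<Lambda>)\<^sup>2 / (2 * fact n))"
      using A r \<Lambda> fact by (intro mult_left_mono divide_left_mono) auto
    finally show ?thesis by (simp add: field_simps)
  qed
  then have "cmod (\<Sum>n. t (n + 2)) \<le> (\<Sum>n. A * (r * \<Lambda>)\<^sup>2 / 2 * ((r * \<Lambda>) ^ n / fact n))"
    by (rule norm_suminf_le[OF _ summable_mult[OF summable_exp_series]])
  also have "\<dots> = r\<^sup>2 * (A * \<Lambda>\<^sup>2 * exp (r * \<Lambda>) / 2)"
    by (simp only: suminf_mult[OF summable_exp_series] suminf_exp_series) (simp add: power_mult_distrib)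
  finally show ?thesis by (simp add: remainder)
qed

lemma conv_psi_pow_binomial:
  "(\<Sum>p\<le>n. conv Delta (\<lambda>z. \<alpha> ^ p * psi_pow p z / fact p)
      (\<lambda>z. \<beta> ^ (n - p) * psi_pow (n - p) z / fact (n - p)) y)
    = (\<alpha> + \<beta>) ^ n * psi_pow n y / fact n"
proof -
  have "conv Delta (\<lambda>z. \<alpha> ^ p * psi_pow p z / fact p) (\<lambda>z. \<beta> ^ (n - p) * psi_pow (n - p) z / fact (n - p)) y
      = of_nat (n choose p) * \<alpha> ^ p * \<beta> ^ (n - p) * psi_pow n y / fact n" if p: "p \<le> n" for p
  proof -
    have "conv Delta (\<lambda>z. \<alpha> ^ p * psi_pow p z / fact p) (\<lambda>z. \<beta> ^ (n - p) * psi_pow (n - p) z / fact (n - p)) y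
        = \<alpha> ^ p * \<beta> ^ (n - p) / (fact p * fact (n - p)) * conv Delta (psi_pow p) (psi_pow (n - p)) y"
      by (simp add: conv_nth sum_distrib_left field_simps)
    also have "conv Delta (psi_pow p) (psi_pow (n - p)) = psi_pow n"
      using psi_pow_add[of p "n - p"] p by simp
    also have "\<alpha> ^ p * \<beta> ^ (n - p) / (fact p * fact (n - p)) = of_nat (n choose p) * \<alpha> ^ p * \<beta> ^ (n - p) / fact n"
      using binomial_fact[OF p, where 'a = complex] by (simp add: field_simps)
    finally show ?thesis by simp
  qed
  then have "(\<Sum>p\<le>n. conv Delta (\<lambda>z. \<alpha> ^ p * psi_pow p z / fact p)
      (\<lambda>z. \<beta> ^ (n - p) * psi_pow (n - p) z / fact (n - p)) y)
    = (\<Sum>p\<le>n. of_nat (n choose p) * \<alpha> ^ p * \<beta> ^ (n - p) * psi_pow n y / fact n)"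
    by (intro sum.cong) auto
  also have "\<dots> = (\<alpha> + \<beta>) ^ n * psi_pow n y / fact n"
    by (simp add: binomial_ring sum_divide_distrib sum_distrib_right)
  finally show ?thesis .
qed

lemma exp_psi_add: "exp_psi (a + b) = conv Delta (exp_psi a) (exp_psi b)"
proof
  fix y
  define k where "k = length (Delta y)"
  define T where "T i n = (\<Sum>p\<le>n. (complex_of_real a ^ p * psi_pow p (left_factor y i) / fact p) *
    (complex_of_real b ^ (n - p) * psi_pow (n - p) (right_factor y i) / fact (n - p)))" for i n
  have cauchy: "(\<lambda>n. T i n) sums (exp_psi a (left_factor y i) * exp_psi b (right_factor y i))" for i
    unfolding T_def exp_psi_def
    by (rule Cauchy_product_sums[OF summable_norm_exp_psi_series summable_norm_exp_psi_series])
  have binomial: "(\<Sum>i<k. T i n) = complex_of_real (a + b) ^ n * psi_pow n y / fact n" for n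
    unfolding T_def k_def using conv_psi_pow_binomial[where \<alpha> = "complex_of_real a" and \<beta> = "complex_of_real b"]
    by (subst sum.swap) (simp add: conv_nth)
  have "conv Delta (exp_psi a) (exp_psi b) y = (\<Sum>i<k. \<Sum>n. T i n)"
    using cauchy by (simp add: conv_nth k_def sums_iff)
  also have "\<dots> = (\<Sum>n. \<Sum>i<k. T i n)"
    by (rule suminf_sum[symmetric]) (use cauchy sums_summable in blast)
  finally show "exp_psi (a + b) y = conv Delta (exp_psi a) (exp_psi b) y"
    by (simp add: binomial exp_psi_def)
qed

lemma exp_psi_uniform_remainder:
  "\<exists>D. (\<forall>y. D y \<ge> 0) \<and>
     (\<forall>y r. 0 \<le> r \<longrightarrow> r \<le> R \<longrightarrow> cmod (exp_psi r y - delta y - r * psi y) \<le> r\<^sup>2 * D y)"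
proof -
  obtain A \<Lambda> where A: "\<And>y. A y \<ge> 0" and \<Lambda>: "\<And>y. \<Lambda> y \<ge> 0"
    and growth: "\<And>y n. cmod (psi_pow n y) \<le> A y * \<Lambda> y ^ n"
    using psi_pow_growth by metis
  define D where "D y = A y * (\<Lambda> y)\<^sup>2 * exp (R * \<Lambda> y) / 2" for y
  have "cmod (exp_psi r y - delta y - r * psi y) \<le> r\<^sup>2 * D y" if "0 \<le> r" "r \<le> R" for r y
  proof -
    have "cmod (exp_psi r y - delta y - r * psi y) \<le> r\<^sup>2 * (A y * (\<Lambda> y)\<^sup>2 * exp (r * \<Lambda> y) / 2)"
      by (rule exp_psi_second_order[OF growth A \<Lambda> \<open>0 \<le> r\<close>])
    also have "\<dots> \<le> r\<^sup>2 * D y"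
      unfolding D_def using that A \<Lambda>
      by (intro mult_left_mono divide_right_mono mult_nonneg_nonneg) (auto intro!: mult_right_mono)
    finally show ?thesis .
  qed
  moreover have "D y \<ge> 0" for y using A by (simp add: D_def)
  ultimately show ?thesis by blast
qed

lemma local_norm_exp_psi_le:
  assumes basis: "left_dual_basis x J H"
  shows "\<exists>K \<Lambda>. K \<ge> 0 \<and> \<Lambda> \<ge> 0 \<and> (\<forall>\<tau>\<ge>0. local_norm x J H (exp_psi \<tau>) \<le> K * exp (\<tau> * \<Lambda>))"
proof -
  obtain A L where A: "\<And>y. A y \<ge> 0" and L: "\<And>y. L y \<ge> 0"
    and growth: "\<And>y n. cmod (psi_pow n y) \<le> A y * L y ^ n"
    using psi_pow_growth by metis
  define rate where "rate = (\<Sum>i<length (Delta x). L (right_factor x i))"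
  have "local_norm x J H (exp_psi \<tau>) \<le> exp (\<tau> * rate) * dual_weight x J H A" if \<tau>: "\<tau> \<ge> 0" for \<tau>
  proof (rule local_norm_le_dual_weight)
    fix i assume i: "i < length (Delta x)"
    have "L (right_factor x i) \<le> rate"
      unfolding rate_def using i L by (intro member_le_sum) auto
    then have "exp (\<bar>\<tau>\<bar> * L (right_factor x i)) \<le> exp (\<tau> * rate)"
      using \<tau> by (simp add: mult_left_mono)
    then have "A (right_factor x i) * exp (\<bar>\<tau>\<bar> * L (right_factor x i))
        \<le> A (right_factor x i) * exp (\<tau> * rate)"
      using A by (rule mult_left_mono)
    with norm_exp_psi_le[of "right_factor x i" "A (right_factor x i)" "L (right_factor x i)" \<tau>, OF growth L]
    show "cmod (exp_psi \<tau> (right_factor x i)) \<le> exp (\<tau> * rate) * A (right_factor x i)"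
      by (simp add: mult.commute)
  qed
  moreover have "dual_weight x J H A \<ge> 0" "rate \<ge> 0"
    using A L by (simp_all add: dual_weight_nonneg rate_def sum_nonneg)
  ultimately show ?thesis
    by (metis mult.commute)
qed

lemma local_norm_conv_diff_exp_psi_le:
  assumes basis: "left_dual_basis x J H" and g: "lin_fun scl g" and G: "lin_fun scl G"
    and D: "\<And>y. D y \<ge> 0" and DE: "\<And>y. DE y \<ge> 0" and \<rho>: "0 \<le> \<rho>"
    and remainder: "\<And>y. cmod (g y - delta y - \<rho> * psi y) \<le> \<rho>\<^sup>2 * D y"
    and exp_remainder: "\<And>y. cmod (exp_psi \<rho> y - delta y - \<rho> * psi y) \<le> \<rho>\<^sup>2 * DE y"
  shows "local_norm x J H (conv Delta (\<lambda>z. g z - exp_psi \<rho> z) G)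
    \<le> \<rho>\<^sup>2 * column_weight x J H (\<lambda>y. D y + DE y) * local_norm x J H G"
proof (rule local_norm_conv_le_weight[OF basis lin_fun_minus[OF g lin_fun_exp_psi] G])
  fix y
  have "cmod (g y - exp_psi \<rho> y) \<le>
      cmod (g y - delta y - \<rho> * psi y) + cmod (exp_psi \<rho> y - delta y - \<rho> * psi y)"
    by (rule order_trans[OF _ norm_triangle_ineq4]) simp
  then show "cmod (g y - exp_psi \<rho> y) \<le> \<rho>\<^sup>2 * (D y + DE y)"
    using remainder[of y] exp_remainder[of y] by (simp add: distrib_left)
qed (use D DE \<rho> in \<open>auto intro: add_nonneg_nonneg\<close>)

section \<open>Products over partitions\<close>

text \<open>The error splits as g_0 * (P' - E') + (g_0 - exp_psi r_0) * E', where P' is the product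
  of the remaining factors and E' the exponential over the remaining time: the first term
  propagates the previous error with growth factor exp (r_0 \<Lambda>), the second is a new local
  error of order r_0^2.\<close>

lemma conv_list_exp_psi_local_error:
  assumes basis: "left_dual_basis x J H" and D: "\<And>y. D y \<ge> 0" and DE: "\<And>y. DE y \<ge> 0"
    and exp_remainder: "\<And>y \<rho>. 0 \<le> \<rho> \<Longrightarrow> \<rho> \<le> R \<Longrightarrow>
      cmod (exp_psi \<rho> y - delta y - \<rho> * psi y) \<le> \<rho>\<^sup>2 * DE y"
    and exp_growth: "\<And>\<tau>. \<tau> \<ge> 0 \<Longrightarrow> local_norm x J H (exp_psi \<tau>) \<le> K * exp (\<tau> * \<Lambda>)"
    and \<Lambda>: "column_weight x J H (\<lambda>y. cmod (psi y)) + R * column_weight x J H D \<le> \<Lambda>"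
    and g: "\<And>j. j < n \<Longrightarrow> lin_fun scl (g j)"
    and r: "\<And>j. j < n \<Longrightarrow> 0 \<le> r j \<and> r j \<le> R"
    and remainder: "\<And>j y. j < n \<Longrightarrow> cmod (g j y - delta y - r j * psi y) \<le> (r j)\<^sup>2 * D y"
  shows "local_norm x J H (\<lambda>y. conv_list Delta delta (map g [0..<n]) y - exp_psi (\<Sum>j<n. r j) y)
    \<le> column_weight x J H (\<lambda>y. D y + DE y) * K * exp ((\<Sum>j<n. r j) * \<Lambda>) * (\<Sum>j<n. (r j)\<^sup>2)"
  using g r remainder
proof (induction n arbitrary: g r)
  case 0
  then show ?case by (simp add: conv_list_def exp_psi_zero local_norm_def conv_nth)
next
  case (Suc n)
  define W where "W = column_weight x J H (\<lambda>y. D y + DE y)"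
  define P' where "P' = conv_list Delta delta (map (\<lambda>j. g (Suc j)) [0..<n])"
  define S' where "S' = (\<Sum>j<n. r (Suc j))"
  define E' where "E' = exp_psi S'"
  have r0: "0 \<le> r 0" "r 0 \<le> R" and S': "S' \<ge> 0"
    using Suc.prems(2) by (auto simp: S'_def intro: sum_nonneg)
  have K: "K \<ge> 0" using exp_growth[of 0] local_norm_nonneg[of x J H "exp_psi 0"] by simp
  have W: "W \<ge> 0" unfolding W_def using D DE by (intro column_weight_nonneg add_nonneg_nonneg)
  have lin: "lin_fun scl (g 0)" "lin_fun scl P'" "lin_fun scl E'"
    using Suc.prems(1) by (auto simp: P'_def E'_def intro!: lin_fun_conv_list lin_fun_exp_psi)
  have IH: "local_norm x J H (\<lambda>y. P' y - E' y) \<le> W * K * exp (S' * \<Lambda>) * (\<Sum>j<n. (r (Suc j))\<^sup>2)"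
    unfolding P'_def E'_def S'_def W_def using Suc.prems by (intro Suc.IH) auto
  have split: "(\<lambda>y. conv_list Delta delta (map g [0..<Suc n]) y - exp_psi (\<Sum>j<Suc n. r j) y) =
      (\<lambda>y. conv Delta (g 0) (\<lambda>z. P' z - E' z) y + conv Delta (\<lambda>z. g 0 z - exp_psi (r 0) z) E' y)"
    unfolding map_upt_Suc sum.lessThan_Suc_shift
    by (simp add: fun_eq_iff conv_list_def P'_def E'_def S'_def exp_psi_add conv_diff_left conv_diff_right
        del: upt_Suc)
  have propagated: "local_norm x J H (conv Delta (g 0) (\<lambda>z. P' z - E' z)) \<le>
      exp (r 0 * \<Lambda>) * (W * K * exp (S' * \<Lambda>) * (\<Sum>j<n. (r (Suc j))\<^sup>2))"
    by (rule order_trans[OF local_norm_first_order_conv_le_exp[OF basis lin(1) lin_fun_minus[OF lin(2,3)]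
          lin_fun_psi D r0 Suc.prems(3)[OF zero_less_Suc] \<Lambda>] mult_left_mono[OF IH exp_ge_zero]])
  have "local_norm x J H (conv Delta (\<lambda>z. g 0 z - exp_psi (r 0) z) E') \<le> (r 0)\<^sup>2 * W * local_norm x J H E'"
    unfolding W_def
    by (rule local_norm_conv_diff_exp_psi_le[OF basis lin(1,3) D DE r0(1) Suc.prems(3)[OF zero_less_Suc]
          exp_remainder[OF r0]])
  also have "\<dots> \<le> (r 0)\<^sup>2 * W * (K * exp (S' * \<Lambda>))"
    unfolding E'_def using W by (intro mult_left_mono exp_growth S') auto
  also have "\<dots> \<le> exp (r 0 * \<Lambda>) * ((r 0)\<^sup>2 * W * K * exp (S' * \<Lambda>))"
  proof -
    have "\<Lambda> \<ge> 0"
      using r0 \<Lambda> column_weight_nonneg[of D x J H, OF D] column_weight_nonneg[of "\<lambda>y. cmod (psi y)" x J H]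
      by (smt (verit) mult_nonneg_nonneg norm_ge_zero)
    then have "1 \<le> exp (r 0 * \<Lambda>)"
      using r0 by simp
    from mult_right_mono[OF this, of "(r 0)\<^sup>2 * W * K * exp (S' * \<Lambda>)"] show ?thesis
      using W K by (simp add: ac_simps)
  qed
  finally have local_error: "local_norm x J H (conv Delta (\<lambda>z. g 0 z - exp_psi (r 0) z) E') \<le>
      exp (r 0 * \<Lambda>) * ((r 0)\<^sup>2 * W * K * exp (S' * \<Lambda>))" .
  have "local_norm x J H (\<lambda>y. conv_list Delta delta (map g [0..<Suc n]) y - exp_psi (\<Sum>j<Suc n. r j) y)
      \<le> exp (r 0 * \<Lambda>) * (W * K * exp (S' * \<Lambda>) * (\<Sum>j<n. (r (Suc j))\<^sup>2))
        + exp (r 0 * \<Lambda>) * ((r 0)\<^sup>2 * W * K * exp (S' * \<Lambda>))"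
    unfolding split
    using local_norm_add_le[of x J H "conv Delta (g 0) (\<lambda>z. P' z - E' z)"
        "conv Delta (\<lambda>z. g 0 z - exp_psi (r 0) z) E'"] propagated local_error
    by linarith
  also have "\<dots> = W * K * exp ((r 0 + S') * \<Lambda>) * ((r 0)\<^sup>2 + (\<Sum>j<n. (r (Suc j))\<^sup>2))"
    by (simp add: distrib_right exp_add algebra_simps)
  finally show ?case
    by (simp add: W_def S'_def sum.lessThan_Suc_shift del: sum.lessThan_Suc)
qed

lemma conv_list_exp_psi_error:
  assumes D: "\<And>y. D y \<ge> 0"
  obtains B \<Lambda> where "B \<ge> 0" "\<Lambda> \<ge> 0"
    and "\<And>n g r. (\<And>j. j < n \<Longrightarrow> lin_fun scl (g j)) \<Longrightarrow> (\<And>j. j < n \<Longrightarrow> 0 \<le> r j \<and> r j \<le> R) \<Longrightarrow>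
      (\<And>j y. j < n \<Longrightarrow> cmod (g j y - delta y - r j * psi y) \<le> (r j)\<^sup>2 * D y) \<Longrightarrow>
      cmod (conv_list Delta delta (map g [0..<n]) x - exp_psi (\<Sum>j<n. r j) x)
        \<le> B * exp ((\<Sum>j<n. r j) * \<Lambda>) * (\<Sum>j<n. (r j)\<^sup>2)"
proof -
  obtain J H where basis: "left_dual_basis x J H"
    using left_dual_basis_exists by blast
  obtain DE where DE: "\<And>y. DE y \<ge> 0"
    and exp_remainder: "\<And>y \<rho>. 0 \<le> \<rho> \<Longrightarrow> \<rho> \<le> R \<Longrightarrow>
      cmod (exp_psi \<rho> y - delta y - \<rho> * psi y) \<le> \<rho>\<^sup>2 * DE y"
    using exp_psi_uniform_remainder by blast
  obtain K \<Lambda>\<^sub>E where K: "K \<ge> 0" and \<Lambda>\<^sub>E: "\<Lambda>\<^sub>E \<ge> 0"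
    and exp_growth: "\<And>\<tau>. \<tau> \<ge> 0 \<Longrightarrow> local_norm x J H (exp_psi \<tau>) \<le> K * exp (\<tau> * \<Lambda>\<^sub>E)"
    using local_norm_exp_psi_le[OF basis] by blast
  define \<Lambda> where "\<Lambda> = max (column_weight x J H (\<lambda>y. cmod (psi y)) + R * column_weight x J H D) \<Lambda>\<^sub>E"
  define B where "B = (\<Sum>j\<in>J. cmod (delta (left_factor x j))) * column_weight x J H (\<lambda>y. D y + DE y) * K"
  have exp_growth': "local_norm x J H (exp_psi \<tau>) \<le> K * exp (\<tau> * \<Lambda>)" if "\<tau> \<ge> 0" for \<tau>
    using exp_growth[OF that] that K by (smt (verit) \<Lambda>_def exp_mono max.cobounded2 mult_left_mono)
  have bound: "cmod (conv_list Delta delta (map g [0..<n]) x - exp_psi (\<Sum>j<n. r j) x)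
      \<le> B * exp ((\<Sum>j<n. r j) * \<Lambda>) * (\<Sum>j<n. (r j)\<^sup>2)"
    if g: "\<And>j. j < n \<Longrightarrow> lin_fun scl (g j)" and r: "\<And>j. j < n \<Longrightarrow> 0 \<le> r j \<and> r j \<le> R"
      and remainder: "\<And>j y. j < n \<Longrightarrow> cmod (g j y - delta y - r j * psi y) \<le> (r j)\<^sup>2 * D y" for n g r
  proof -
    have "lin_fun scl (\<lambda>y. conv_list Delta delta (map g [0..<n]) y - exp_psi (\<Sum>j<n. r j) y)"
      using g by (intro lin_fun_minus lin_fun_conv_list lin_fun_exp_psi) auto
    then have "cmod (conv_list Delta delta (map g [0..<n]) x - exp_psi (\<Sum>j<n. r j) x)
        \<le> (\<Sum>j\<in>J. cmod (delta (left_factor x j))) *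
          local_norm x J H (\<lambda>y. conv_list Delta delta (map g [0..<n]) y - exp_psi (\<Sum>j<n. r j) y)"
      by (rule norm_le_local_norm[OF basis])
    also have "\<dots> \<le> (\<Sum>j\<in>J. cmod (delta (left_factor x j))) *
        (column_weight x J H (\<lambda>y. D y + DE y) * K * exp ((\<Sum>j<n. r j) * \<Lambda>) * (\<Sum>j<n. (r j)\<^sup>2))"
      using g r remainder
      by (intro mult_left_mono conv_list_exp_psi_local_error[OF basis D DE exp_remainder exp_growth'])
        (auto simp: \<Lambda>_def intro: sum_nonneg)
    finally show ?thesis by (simp add: B_def ac_simps)
  qed
  have "B \<ge> 0" "\<Lambda> \<ge> 0"
    using D DE K \<Lambda>\<^sub>E by (auto simp: B_def \<Lambda>_def intro!: mult_nonneg_nonneg sum_nonneg column_weight_nonneg add_nonneg_nonneg)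
  then show ?thesis using bound by (rule that)
qed

lemma conv_list_partition_error:
  fixes f :: "'m \<Rightarrow> real \<Rightarrow> 'a \<Rightarrow> complex"
  assumes f_lin: "\<And>\<mu> r. \<mu> \<in> M \<Longrightarrow> r \<ge> 0 \<Longrightarrow> lin_fun scl (f \<mu> r)"
    and remainder: "\<And>y. \<exists>D > 0. \<forall>\<mu>\<in>M. \<forall>r. 0 \<le> r \<longrightarrow> r \<le> R \<longrightarrow>
      cmod (f \<mu> r y - delta y - r * psi y) \<le> r\<^sup>2 * D"
  obtains B \<Lambda> :: real where "B \<ge> 0" "\<Lambda> \<ge> 0"
    and "\<And>s t n (tt :: nat \<Rightarrow> real) (mu :: nat \<Rightarrow> 'm). tt 0 = s \<Longrightarrow> tt n = t \<Longrightarrow>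
      \<forall>j<n. tt j < tt (Suc j) \<Longrightarrow> mesh n tt \<le> R \<Longrightarrow> \<forall>j\<in>{1..n}. mu j \<in> M \<Longrightarrow>
      cmod (conv_list Delta delta (map (\<lambda>j. f (mu (Suc j)) (tt (Suc j) - tt j)) [0..<n]) x
        - conv_exp Delta delta (\<lambda>y. complex_of_real (t - s) * psi y) x)
      \<le> B * exp ((t - s) * \<Lambda>) * (mesh n tt * (t - s))"
proof -
  obtain D where D: "\<And>y. D y \<ge> 0" and f_remainder: "\<And>y \<mu> r. \<mu> \<in> M \<Longrightarrow> 0 \<le> r \<Longrightarrow> r \<le> R \<Longrightarrow>
      cmod (f \<mu> r y - delta y - r * psi y) \<le> r\<^sup>2 * D y"
    using remainder by (metis less_imp_le)
  obtain B \<Lambda> where B: "B \<ge> 0" "\<Lambda> \<ge> 0"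
    and error: "\<And>n g r. (\<And>j. j < n \<Longrightarrow> lin_fun scl (g j)) \<Longrightarrow> (\<And>j. j < n \<Longrightarrow> 0 \<le> r j \<and> r j \<le> R) \<Longrightarrow>
      (\<And>j y. j < n \<Longrightarrow> cmod (g j y - delta y - r j * psi y) \<le> (r j)\<^sup>2 * D y) \<Longrightarrow>
      cmod (conv_list Delta delta (map g [0..<n]) x - exp_psi (\<Sum>j<n. r j) x)
        \<le> B * exp ((\<Sum>j<n. r j) * \<Lambda>) * (\<Sum>j<n. (r j)\<^sup>2)"
    using conv_list_exp_psi_error[where D = D and R = R and x = x, OF D] by blast
  have "cmod (conv_list Delta delta (map (\<lambda>j. f (mu (Suc j)) (tt (Suc j) - tt j)) [0..<n]) x
      - conv_exp Delta delta (\<lambda>y. complex_of_real (t - s) * psi y) x)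
    \<le> B * exp ((t - s) * \<Lambda>) * (mesh n tt * (t - s))"
    if "tt 0 = s" "tt n = t" and incr: "\<forall>j<n. tt j < tt (Suc j)" and "mesh n tt \<le> R"
      and mu: "\<forall>j\<in>{1..n}. mu j \<in> M" for s t n tt mu
  proof -
    define r where "r j = tt (Suc j) - tt j" for j
    have r: "0 \<le> r j \<and> r j \<le> R" if "j < n" for j
      using that incr increment_le_mesh[OF that, of tt] \<open>mesh n tt \<le> R\<close>
      by (auto simp: r_def less_imp_le)
    have total: "(\<Sum>j<n. r j) = t - s"
      using \<open>tt 0 = s\<close> \<open>tt n = t\<close> by (simp add: r_def sum_lessThan_telescope)
    have "cmod (conv_list Delta delta (map (\<lambda>j. f (mu (Suc j)) (r j)) [0..<n]) x - exp_psi (\<Sum>j<n. r j) x)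
        \<le> B * exp ((\<Sum>j<n. r j) * \<Lambda>) * (\<Sum>j<n. (r j)\<^sup>2)"
    proof (rule error)
      fix j assume j: "j < n"
      then have "mu (Suc j) \<in> M" using mu by simp
      with j show "lin_fun scl (f (mu (Suc j)) (r j))" using f_lin r by blast
      show "0 \<le> r j \<and> r j \<le> R" using r j .
    next
      fix j y assume j: "j < n"
      then have "mu (Suc j) \<in> M" using mu by simp
      with j show "cmod (f (mu (Suc j)) (r j) y - delta y - r j * psi y) \<le> (r j)\<^sup>2 * D y"
        using f_remainder r by blast
    qed
    also have "\<dots> \<le> B * exp ((t - s) * \<Lambda>) * (mesh n tt * (t - s))"
      unfolding total using sum_squared_increments_le[of n tt] incr B \<open>tt 0 = s\<close> \<open>tt n = t\<close>
      by (intro mult_left_mono) (auto simp: r_def less_imp_le)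
    finally show ?thesis
      unfolding conv_exp_eq_exp_psi total[symmetric] by (simp add: r_def)
  qed
  with B show ?thesis by (rule that)
qed

end

lemma error_bound_reshape:
  fixes B \<Lambda> :: real
  assumes B: "B \<ge> 0" and \<Lambda>: "\<Lambda> \<ge> 0"
  obtains Cc Psi where "Cc > 0" "Psi > 0"
    and "\<And>m \<tau> e. 0 \<le> m \<Longrightarrow> 0 \<le> \<tau> \<Longrightarrow> e \<le> B * exp (\<tau> * \<Lambda>) * (m * \<tau>) \<Longrightarrow>
      e \<le> m * \<tau> * exp (\<tau> * max Psi Cc) * (Cc\<^sup>2 + Psi\<^sup>2 * exp (m * Psi)) / 2"
proof -
  define C where "C = 2 * B + \<Lambda> + 1"
  have C: "2 * B \<le> C" "1 \<le> C" "\<Lambda> \<le> C"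
    using B \<Lambda> by (simp_all add: C_def)
  have "e \<le> m * \<tau> * exp (\<tau> * max 1 C) * (C\<^sup>2 + 1\<^sup>2 * exp (m * 1)) / 2"
    if m: "0 \<le> m" and \<tau>: "0 \<le> \<tau>" and e: "e \<le> B * exp (\<tau> * \<Lambda>) * (m * \<tau>)" for m \<tau> e
  proof -
    have "C \<le> C * C"
      using mult_left_mono[of 1 C C] C by simp
    then have B_le: "B \<le> (C\<^sup>2 + 1\<^sup>2 * exp (m * 1)) / 2"
      using C(1) exp_gt_zero[of m] by (simp add: power2_eq_square del: exp_gt_zero)
    have "\<tau> * \<Lambda> \<le> \<tau> * max 1 C"
      using C \<tau> by (intro mult_left_mono) simp_all
    then have exp_le: "exp (\<tau> * \<Lambda>) \<le> exp (\<tau> * max 1 C)"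
      by simp
    have "B * exp (\<tau> * \<Lambda>) * (m * \<tau>) \<le> (C\<^sup>2 + 1\<^sup>2 * exp (m * 1)) / 2 * exp (\<tau> * max 1 C) * (m * \<tau>)"
      using B m \<tau> by (intro mult_right_mono mult_mono[OF B_le exp_le]) simp_all
    with e show ?thesis by (simp add: ac_simps)
  qed
  moreover have "C > 0" using C by simp
  ultimately show ?thesis using that[of C 1] by simp
qed

theorem lemma4p2:
  fixes scl :: "complex \<Rightarrow> 'c::ab_group_add \<Rightarrow> 'c"
    and Delta :: "'c coprod" and delta :: "'c \<Rightarrow> complex"
    and R :: real and psi :: "'c \<Rightarrow> complex"
    and M :: "'m set" and f :: "'m \<Rightarrow> real \<Rightarrow> 'c \<Rightarrow> complex"
  assumes coalg: "coalgebra scl Delta delta"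
    and R_pos: "R > 0"
    and psi_lin: "lin_fun scl psi"
    and f_lin: "\<And>\<mu> r. \<mu> \<in> M \<Longrightarrow> r \<ge> 0 \<Longrightarrow> lin_fun scl (f \<mu> r)"
    and remainder: "\<And>c. \<exists>D > 0. \<forall>\<mu>\<in>M. \<forall>r. 0 \<le> r \<longrightarrow> r \<le> R \<longrightarrow>
                      cmod (f \<mu> r c - delta c - complex_of_real r * psi c) \<le> r\<^sup>2 * D"
  shows "\<forall>c. \<exists>Cc > 0. \<exists>Psi > 0. \<forall>s t n (tt :: nat \<Rightarrow> real) (mu :: nat \<Rightarrow> 'm).
           0 \<le> s \<longrightarrow> s \<le> t \<longrightarrow> tt 0 = s \<longrightarrow> tt n = t \<longrightarrow>
           (\<forall>j<n. tt j < tt (Suc j)) \<longrightarrow> mesh n tt \<le> R \<longrightarrow>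
           (\<forall>j\<in>{1..n}. mu j \<in> M) \<longrightarrow>
           cmod (conv_list Delta delta
                   (map (\<lambda>j. f (mu (Suc j)) (tt (Suc j) - tt j)) [0..<n]) c
                 - conv_exp Delta delta (\<lambda>x. complex_of_real (t - s) * psi x) c)
           \<le> mesh n tt * (t - s) * exp ((t - s) * max Psi Cc)
              * (Cc\<^sup>2 + Psi\<^sup>2 * exp (mesh n tt * Psi)) / 2"
proof (intro allI, goal_cases)
  case (1 c)
  interpret coalgebra_functional scl Delta delta psi
    by unfold_locales (rule coalg, rule psi_lin)
  obtain B \<Lambda> where "B \<ge> 0" "\<Lambda> \<ge> 0"
    and bound: "\<And>s t n tt mu. tt 0 = s \<Longrightarrow> tt n = t \<Longrightarrow> \<forall>j<n. tt j < tt (Suc j) \<Longrightarrow> mesh n tt \<le> R \<Longrightarrow>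
      \<forall>j\<in>{1..n}. mu j \<in> M \<Longrightarrow>
      cmod (conv_list Delta delta (map (\<lambda>j. f (mu (Suc j)) (tt (Suc j) - tt j)) [0..<n]) c
        - conv_exp Delta delta (\<lambda>y. complex_of_real (t - s) * psi y) c)
      \<le> B * exp ((t - s) * \<Lambda>) * (mesh n tt * (t - s))"
    using conv_list_partition_error[where x = c, OF f_lin remainder] by blast
  obtain Cc Psi where "Cc > 0" "Psi > 0"
    and reshape: "\<And>m \<tau> e. 0 \<le> m \<Longrightarrow> 0 \<le> \<tau> \<Longrightarrow> e \<le> B * exp (\<tau> * \<Lambda>) * (m * \<tau>) \<Longrightarrow>
      e \<le> m * \<tau> * exp (\<tau> * max Psi Cc) * (Cc\<^sup>2 + Psi\<^sup>2 * exp (m * Psi)) / 2"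
    using error_bound_reshape[OF \<open>B \<ge> 0\<close> \<open>\<Lambda> \<ge> 0\<close>] by blast
  show ?case
  proof (rule exI[of _ Cc], intro conjI exI[of _ Psi] allI impI reshape mesh_nonneg bound)
  qed (simp_all add: \<open>Cc > 0\<close> \<open>Psi > 0\<close>)
qed

end
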